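(* Assume $p\nmid a$. For all integers $r,s,t$ there exists a constant $C$ (depending on $r,s,t$) such that for every integer $v\ge C$, $$\#\Omega_{v,r,s,t}=1-g+v+(q^{a-1}-1)r+q^{b-1}s+(q-1)t.$$
   Context: Let $p$ be a prime, $q$ a power of $p$, $b\ge1$ an integer, $a=b+1$, $c=a+b$, $N_k=(q^k-1)/(q-1)$, and $g=\frac12\big((q^c-2)(q^{a-1}+q^{b-1}-2)+(q^c-q)\big)$. For integers $v,r,s,t$ define the lattice point set $\Omega_{v,r,s,t}=\{(i,j,k)\in\mathbb{Z}^3:\ -v\le i,\ \ -r\le i+(q^c-1)k<-r+(q^c-1),\ \ -s\le -q^ai+(q^c-1)j<(q^c-1)-s,\ \ -t\le q^{a-1}N_b\,i-q^{b-1}N_c\,j-(q^{a-1}-1)N_c\,k\}$. *)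

theory Defs
  imports Complex_Main "HOL-Computational_Algebra.Primes"
begin

definition N :: "int \<Rightarrow> nat \<Rightarrow> int" where
  "N q k = (q ^ k - 1) div (q - 1)"

definition genus :: "int \<Rightarrow> nat \<Rightarrow> nat \<Rightarrow> rat" where
  "genus q a b = (let c = a + b in
     (of_int ((q ^ c - 2) * (q ^ (a - 1) + q ^ (b - 1) - 2) + (q ^ c - q))) / 2)"

definition Omega :: "int \<Rightarrow> nat \<Rightarrow> nat \<Rightarrow> int \<Rightarrow> int \<Rightarrow> int \<Rightarrow> int \<Rightarrow> (int \<times> int \<times> int) set" where
  "Omega q a b v r s t = (let c = a + b in
     {(i, j, k). - v \<le> i
       \<and> - r \<le> i + (q ^ c - 1) * k \<and> i + (q ^ c - 1) * k < - r + (q ^ c - 1)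
       \<and> - s \<le> - (q ^ a) * i + (q ^ c - 1) * j \<and> - (q ^ a) * i + (q ^ c - 1) * j < (q ^ c - 1) - s
       \<and> - t \<le> q ^ (a - 1) * N q b * i - q ^ (b - 1) * N q c * j - (q ^ (a - 1) - 1) * N q c * k})"

end

theory Submission
  imports Defs
begin

text \<open>
  For fixed \<open>i\<close>, each of the two window conditions of \<open>\<Omega>\<close> admits exactly one integer,
  \<open>j = J s i\<close> and \<open>k = K r i\<close>, so \<open>#\<Omega>\<close> counts the integers \<open>i \<ge> -v\<close> with
  \<open>F r s i \<ge> -t\<close> for an explicit function \<open>F\<close>. With \<open>Q = q\<^sup>c - 1\<close> this function satisfies
  \<open>F (i + Q n) = F i - n N\<^sub>c\<close>, so writing \<open>i = i\<^sub>0 + Q n\<close> with \<open>i\<^sub>0\<close> in the window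
  \<open>[-v, -v + Q)\<close> gives \<open>#\<Omega> = \<Sum>\<^sub>i\<^sub>0 (\<lfloor>(F i\<^sub>0 + t) / N\<^sub>c\<rfloor> + 1)\<close>
  as soon as \<open>F \<ge> -t\<close> on the window, which holds for large \<open>v\<close> because \<open>F\<close> decreases
  linearly. Finally \<open>\<lfloor>(F i\<^sub>0 + t) / N\<^sub>c\<rfloor>\<close> splits into floors of affine functions whose
  slopes are coprime to their moduli; over whole periods their fractional parts run through
  complete residue systems, which evaluates each floor sum in closed form.
\<close>


lemma sum_int_atLeastLessThan:
  fixes x0 :: int
  shows "2 * (\<Sum>i\<in>{x0..<x0 + int n}. i) = int n * (2 * x0 + int n - 1)"
proof (induction n)
  case (Suc n)
  have "{x0..<x0 + int (Suc n)} = insert (x0 + int n) {x0..<x0 + int n}"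
    by auto
  then show ?case
    using Suc by (simp add: algebra_simps)
qed simp

lemma inj_on_affine_mod:
  fixes m n t x0 :: int
  assumes "coprime m n"
  shows "inj_on (\<lambda>i. (m * i + t) mod n) {x0..<x0 + n}"
proof
  fix i j
  assume i: "i \<in> {x0..<x0 + n}" and j: "j \<in> {x0..<x0 + n}"
    and eq: "(m * i + t) mod n = (m * j + t) mod n"
  have "n dvd m * (i - j)"
    using eq by (simp add: mod_eq_dvd_iff algebra_simps)
  then have "n dvd i - j"
    using assms by (simp add: coprime_commute coprime_dvd_mult_right_iff)
  moreover have "\<bar>i - j\<bar> < \<bar>n\<bar>"
    using i j by auto
  ultimately show "i = j"
    using dvd_imp_le_int[of "i - j" n] by fastforce
qed

lemma affine_mod_image_interval:
  fixes m n t x0 :: int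
  assumes "n > 0" and "coprime m n"
  shows "(\<lambda>i. (m * i + t) mod n) ` {x0..<x0 + n} = {0..<n}"
proof (rule card_subset_eq)
  show "card ((\<lambda>i. (m * i + t) mod n) ` {x0..<x0 + n}) = card {0..<n}"
    using card_image[OF inj_on_affine_mod[OF assms(2)]] by simp
qed (use assms(1) in auto)

lemma sum_affine_mod_interval:
  fixes m n t x0 :: int
  assumes "n > 0" and "coprime m n"
  shows "2 * (\<Sum>i\<in>{x0..<x0 + n}. (m * i + t) mod n) = n * (n - 1)"
proof -
  have "(\<Sum>i\<in>{x0..<x0 + n}. (m * i + t) mod n) = (\<Sum>y\<in>{0..<0 + int (nat n)}. y)"
    using sum.reindex[OF inj_on_affine_mod[OF assms(2)], of id] affine_mod_image_interval[OF assms]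
      assms(1) by simp
  then show ?thesis
    using sum_int_atLeastLessThan[of 0 "nat n"] assms(1) by simp
qed

lemma sum_affine_mod_periods:
  fixes m n t x0 :: int
  assumes "n > 0" and "coprime m n"
  shows "2 * (\<Sum>i\<in>{x0..<x0 + int l * n}. (m * i + t) mod n) = int l * n * (n - 1)"
proof (induction l)
  case (Suc l)
  let ?x = "x0 + int l * n"
  have "{x0..<x0 + int (Suc l) * n} = {x0..<?x} \<union> {?x..<?x + n}"
    using assms(1) by (simp add: ivl_disj_un_two(3) algebra_simps)
  moreover have "{x0..<?x} \<inter> {?x..<?x + n} = {}"
    by auto
  ultimately show ?case
    using Suc sum_affine_mod_interval[OF assms, of t ?x]
    by (simp add: sum.union_disjoint algebra_simps)
qed simp

lemma sum_affine_div_periods: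
  fixes m n t x0 :: int
  assumes "n > 0" and "coprime m n"
  shows "2 * n * (\<Sum>i\<in>{x0..<x0 + int l * n}. (m * i + t) div n)
    = int l * n * (m * (2 * x0 + int l * n - 1) + 2 * t - (n - 1))"
proof -
  let ?I = "{x0..<x0 + int l * n}"
  have "n * (\<Sum>i\<in>?I. (m * i + t) div n) = (\<Sum>i\<in>?I. m * i + t - (m * i + t) mod n)"
    by (simp add: sum_distrib_left minus_mod_eq_mult_div)
  also have "\<dots> = m * (\<Sum>i\<in>?I. i) + int l * n * t - (\<Sum>i\<in>?I. (m * i + t) mod n)"
    using assms(1) by (simp add: sum_subtractf sum.distrib sum_distrib_left)
  finally have "n * (\<Sum>i\<in>?I. (m * i + t) div n)
    = m * (\<Sum>i\<in>?I. i) + int l * n * t - (\<Sum>i\<in>?I. (m * i + t) mod n)" .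
  moreover have "2 * (\<Sum>i\<in>?I. i) = int l * n * (2 * x0 + int l * n - 1)"
    using sum_int_atLeastLessThan[of x0 "nat (int l * n)"] assms(1) by simp
  moreover note sum_affine_mod_periods[OF assms, of t x0 l]
  ultimately show ?thesis
    by algebra
qed

lemma window_iff_eq_neg_div:
  fixes Q w L j :: int
  assumes "Q > 0"
  shows "L \<le> w + Q * j \<and> w + Q * j < L + Q \<longleftrightarrow> j = - ((w - L) div Q)"
proof
  assume "L \<le> w + Q * j \<and> w + Q * j < L + Q"
  then have "(w - L) div Q = - j"
    by (intro int_div_pos_eq[where r = "w + Q * j - L"]) (auto simp: algebra_simps)
  then show "j = - ((w - L) div Q)"
    by simp
next
  assume "j = - ((w - L) div Q)"
  then have "w + Q * j - L = (w - L) mod Q"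
    by (simp add: algebra_simps minus_div_mult_eq_mod [symmetric])
  then show "L \<le> w + Q * j \<and> w + Q * j < L + Q"
    using pos_mod_sign[OF assms, of "w - L"] pos_mod_bound[OF assms, of "w - L"] by linarith
qed

lemma card_nonneg_multiples_le:
  fixes X k :: int
  assumes "k > 0" and "X \<ge> 0"
  shows "int (card {n. 0 \<le> n \<and> n * k \<le> X}) = X div k + 1"
proof -
  have "{n. 0 \<le> n \<and> n * k \<le> X} = {0..X div k}"
  proof (intro set_eqI iffI)
    fix n assume "n \<in> {n. 0 \<le> n \<and> n * k \<le> X}"
    then show "n \<in> {0..X div k}"
      using assms(1) zdiv_mono1[of "n * k" X k] by simp
  next
    fix n assume "n \<in> {0..X div k}"
    then have "n * k \<le> X div k * k"
      using assms(1) by (simp add: mult_right_mono)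
    also have "\<dots> \<le> X"
      using assms(1) by (simp add: minus_mod_eq_div_mult [symmetric])
    finally show "n \<in> {n. 0 \<le> n \<and> n * k \<le> X}"
      using \<open>n \<in> {0..X div k}\<close> by simp
  qed
  then show ?thesis
    using assms by (simp add: pos_imp_zdiv_nonneg_iff)
qed

lemma inj_on_window_plus_multiple:
  fixes P x0 :: int
  shows "inj_on (\<lambda>(i, n). i + P * n) ({x0..<x0 + P} \<times> UNIV)"
proof (rule inj_onI, clarsimp)
  fix i n i' n' :: int
  assume i: "x0 \<le> i" "i < x0 + P" and i': "x0 \<le> i'" "i' < x0 + P"
    and eq: "i + P * n = i' + P * n'"
  have "i - x0 = ((i - x0) + P * n) mod P"
    using i by simp
  also have "\<dots> = ((i' - x0) + P * n') mod P"
    using eq by (simp add: algebra_simps)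
  also have "\<dots> = i' - x0"
    using i' by simp
  finally show "i = i' \<and> n = n'"
    using eq i by auto
qed

lemma quasiperiodic_superlevel_eq_image:
  fixes F :: "int \<Rightarrow> int" and P d x0 c :: int
  assumes "P > 0" and shift: "\<And>i n. F (i + P * n) = F i - n * d"
  shows "{i. x0 \<le> i \<and> c \<le> F i}
    = (\<lambda>(i, n). i + P * n) ` (SIGMA i:{x0..<x0 + P}. {n. 0 \<le> n \<and> n * d \<le> F i - c})"
proof (intro set_eqI iffI)
  fix i
  assume "i \<in> {i. x0 \<le> i \<and> c \<le> F i}"
  then have i: "x0 \<le> i" "c \<le> F i"
    by auto
  define i0 where "i0 = x0 + (i - x0) mod P"
  define n where "n = (i - x0) div P"
  have "i = i0 + P * n"
    by (simp add: i0_def n_def algebra_simps)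
  moreover have "i0 \<in> {x0..<x0 + P}" "0 \<le> n"
    using i assms(1) by (simp_all add: i0_def n_def pos_imp_zdiv_nonneg_iff)
  moreover have "n * d \<le> F i0 - c"
    using shift[of i0 n] i \<open>i = i0 + P * n\<close> by simp
  ultimately show "i \<in> (\<lambda>(i, n). i + P * n) ` (SIGMA i:{x0..<x0 + P}. {n. 0 \<le> n \<and> n * d \<le> F i - c})"
    by force
next
  fix i
  assume "i \<in> (\<lambda>(i, n). i + P * n) ` (SIGMA i:{x0..<x0 + P}. {n. 0 \<le> n \<and> n * d \<le> F i - c})"
  then obtain i0 n where "i = i0 + P * n" "x0 \<le> i0" "0 \<le> n" "n * d \<le> F i0 - c"
    by auto
  moreover have "0 \<le> P * n"
    using assms(1) \<open>0 \<le> n\<close> by simp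
  ultimately show "i \<in> {i. x0 \<le> i \<and> c \<le> F i}"
    using shift[of i0 n] by simp
qed

lemma card_quasiperiodic_superlevel:
  fixes F :: "int \<Rightarrow> int" and P d x0 c :: int
  assumes "P > 0" and "d > 0" and shift: "\<And>i n. F (i + P * n) = F i - n * d"
    and above: "\<forall>i\<in>{x0..<x0 + P}. c \<le> F i"
  shows "int (card {i. x0 \<le> i \<and> c \<le> F i}) = (\<Sum>i\<in>{x0..<x0 + P}. (F i - c) div d + 1)"
proof -
  let ?B = "\<lambda>i. {n. 0 \<le> n \<and> n * d \<le> F i - c}"
  have "?B i \<subseteq> {0..F i - c}" for i
  proof
    fix n
    assume n: "n \<in> ?B i"
    then have "n \<le> n * d"
      using assms(2) by (simp add: mult_le_cancel_left1)
    with n show "n \<in> {0..F i - c}"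
      by simp
  qed
  then have fin: "finite (?B i)" for i
    by (rule finite_subset) simp
  have "inj_on (\<lambda>(i, n). i + P * n) (SIGMA i:{x0..<x0 + P}. ?B i)"
    by (rule inj_on_subset[OF inj_on_window_plus_multiple]) auto
  then have "card {i. x0 \<le> i \<and> c \<le> F i} = card (SIGMA i:{x0..<x0 + P}. ?B i)"
    unfolding quasiperiodic_superlevel_eq_image[OF assms(1) shift] by (rule card_image)
  also have "\<dots> = (\<Sum>i\<in>{x0..<x0 + P}. card (?B i))"
    using fin by (intro card_SigmaI) auto
  finally show ?thesis
    using above card_nonneg_multiples_le[OF assms(2)] by simp
qed

lemma N_mult_pred: "(q - 1) * N q k = q ^ k - 1"
proof -
  have "q - 1 dvd q ^ k - 1"
    by (metis dvd_triv_left power_diff_1_eq)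
  then show ?thesis
    unfolding N_def by simp
qed

text \<open>In the notation of the paper \<open>a = b + 1\<close> and \<open>c = 2 b + 1\<close>.\<close>

locale omega_count =
  fixes q :: int and b :: nat
  assumes q_ge_2: "q \<ge> 2" and b_ge_1: "b \<ge> 1"
begin

abbreviation Nb :: int where "Nb \<equiv> N q b"
abbreviation Nc :: int where "Nc \<equiv> N q (2 * b + 1)"

definition Q :: int where "Q = q ^ (2 * b + 1) - 1"

definition J :: "int \<Rightarrow> int \<Rightarrow> int" where "J s i = - ((s - q ^ (b + 1) * i) div Q)"

definition K :: "int \<Rightarrow> int \<Rightarrow> int" where "K r i = - ((r + i) div Q)"

definition F :: "int \<Rightarrow> int \<Rightarrow> int \<Rightarrow> int" where
  "F r s i = q ^ b * Nb * i - q ^ (b - 1) * Nc * J s i - (q ^ b - 1) * Nc * K r i"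

lemma pow_b_eq: "q ^ b = q * q ^ (b - 1)"
  using b_ge_1 by (simp flip: power_Suc)

lemma pow_c_eq: "q ^ (2 * b + 1) = q * q ^ b * q ^ b"
  by (simp add: power_add mult_2)

lemma Q_eq: "Q = (q - 1) * Nc"
  by (simp add: Q_def N_mult_pred)

lemma Q_pos: "Q > 0"
proof -
  have "q ^ 1 < q ^ (2 * b + 1)"
    using q_ge_2 b_ge_1 by (intro power_strict_increasing) auto
  then show ?thesis
    unfolding Q_def power_one_right using q_ge_2 by linarith
qed

lemma Nc_pos: "Nc > 0"
  using Q_pos q_ge_2 by (simp add: Q_eq zero_less_mult_iff)

lemma Nc_eq: "Nc = (q ^ (b + 1) + q) * Nb + 1"
proof -
  have "(q - 1) * ((q ^ (b + 1) + q) * Nb + 1) = (q ^ (b + 1) + q) * ((q - 1) * Nb) + (q - 1)"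
    by (simp add: algebra_simps)
  also have "\<dots> = (q ^ (b + 1) + q) * (q ^ b - 1) + (q - 1)"
    by (simp only: N_mult_pred)
  also have "\<dots> = q ^ (2 * b + 1) - 1"
    unfolding pow_c_eq by (simp add: algebra_simps)
  also have "\<dots> = (q - 1) * Nc"
    by (simp only: N_mult_pred)
  finally show ?thesis
    using q_ge_2 by simp
qed

lemma coprime_pow_Nb_Nc: "coprime (q ^ b * Nb) Nc"
proof -
  have "coprime Nb ((q ^ (b + 1) + q) * Nb + 1)"
    using coprime_add_one_right[of "(q ^ (b + 1) + q) * Nb"] by (simp only: coprime_mult_left_iff)
  moreover have "coprime q (q * ((q ^ b + 1) * Nb) + 1)"
    using coprime_add_one_right[of "q * ((q ^ b + 1) * Nb)"] by (simp only: coprime_mult_left_iff)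
  ultimately have "coprime Nb Nc" "coprime q Nc"
    unfolding Nc_eq by (simp_all add: algebra_simps)
  then show ?thesis
    by simp
qed

lemma coprime_pow_Q: "coprime (- (q ^ (b + 1))) Q"
proof -
  have "Q = q ^ (b + 1) * q ^ b - 1"
    unfolding Q_def pow_c_eq by simp
  then show ?thesis
    using coprime_doff_one_right[of "q ^ (b + 1) * q ^ b"]
    by (simp only: coprime_mult_left_iff coprime_minus_left_iff)
qed

lemma K_iff: "- r \<le> i + Q * k \<and> i + Q * k < - r + Q \<longleftrightarrow> k = K r i"
  using window_iff_eq_neg_div[OF Q_pos, of "- r" i k] by (simp add: K_def add.commute)

lemma J_iff:
  "- s \<le> - (q ^ (b + 1)) * i + Q * j \<and> - (q ^ (b + 1)) * i + Q * j < - s + Q \<longleftrightarrow> j = J s i"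
  using window_iff_eq_neg_div[OF Q_pos, of "- s" "- (q ^ (b + 1)) * i" j] by (simp add: J_def)

lemma Omega_eq_image:
  "Omega q (b + 1) b v r s t = (\<lambda>i. (i, J s i, K r i)) ` {i. - v \<le> i \<and> - t \<le> F r s i}"
proof -
  have "Omega q (b + 1) b v r s t = {(i, j, k). - v \<le> i
      \<and> (- r \<le> i + Q * k \<and> i + Q * k < - r + Q)
      \<and> (- s \<le> - (q ^ (b + 1)) * i + Q * j \<and> - (q ^ (b + 1)) * i + Q * j < - s + Q)
      \<and> - t \<le> q ^ b * Nb * i - q ^ (b - 1) * Nc * j - (q ^ b - 1) * Nc * k}"
    unfolding Omega_def Let_def Q_def by (simp add: algebra_simps flip: mult_2_right)
  then show ?thesis
    unfolding J_iff unfolding K_iff by (auto simp: F_def)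
qed

lemma J_shift: "J s (i + Q * n) = J s i + q ^ (b + 1) * n"
proof -
  have "s - q ^ (b + 1) * (i + Q * n) = (s - q ^ (b + 1) * i) + (- (q ^ (b + 1) * n)) * Q"
    by (simp add: algebra_simps)
  then have "(s - q ^ (b + 1) * (i + Q * n)) div Q = - (q ^ (b + 1) * n) + (s - q ^ (b + 1) * i) div Q"
    using Q_pos by (simp only: div_mult_self1)
  then show ?thesis
    by (simp add: J_def)
qed

lemma K_shift: "K r (i + Q * n) = K r i - n"
proof -
  have "r + (i + Q * n) = (r + i) + n * Q"
    by (simp add: algebra_simps)
  then have "(r + (i + Q * n)) div Q = n + (r + i) div Q"
    using Q_pos by (simp only: div_mult_self1)
  then show ?thesis
    by (simp add: K_def)
qed

lemma shift_coefficient: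
  "q ^ b * Nb * Q - q ^ (b - 1) * Nc * q ^ (b + 1) + (q ^ b - 1) * Nc = - Nc"
proof -
  have "q ^ b * Nb * Q = q ^ b * ((q - 1) * Nb) * Nc"
    unfolding Q_eq by (simp add: algebra_simps)
  also have "\<dots> = q ^ b * (q ^ b - 1) * Nc"
    by (simp only: N_mult_pred)
  finally have Nb_Q: "q ^ b * Nb * Q = q ^ b * (q ^ b - 1) * Nc" .
  have pow: "q ^ (b - 1) * Nc * q ^ (b + 1) = q ^ b * q ^ b * Nc"
    using pow_b_eq by (simp add: algebra_simps)
  show ?thesis
    unfolding Nb_Q pow by (simp add: algebra_simps)
qed

lemma F_shift: "F r s (i + Q * n) = F r s i - n * Nc"
proof -
  have "F r s (i + Q * n)
    = F r s i + n * (q ^ b * Nb * Q - q ^ (b - 1) * Nc * q ^ (b + 1) + (q ^ b - 1) * Nc)"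
    unfolding F_def J_shift K_shift by (simp add: algebra_simps)
  then show ?thesis
    unfolding shift_coefficient by simp
qed

lemma F_lower_bound:
  "Q * F r s i \<ge> q ^ (b - 1) * Nc * (s - Q) + (q ^ b - 1) * Nc * (r - Q) - Nc * i"
proof -
  have div_bound: "Q * (x div Q) > x - Q" for x
    using minus_mod_eq_mult_div[of x Q] pos_mod_bound[OF Q_pos, of x] by linarith
  have J_bound: "Q * J s i \<le> q ^ (b + 1) * i - s + Q"
    using div_bound[of "s - q ^ (b + 1) * i"] by (simp add: J_def)
  have K_bound: "Q * K r i \<le> - (r + i) + Q"
    using div_bound[of "r + i"] by (simp add: K_def)
  have "0 \<le> q ^ (b - 1) * Nc" "0 \<le> (q ^ b - 1) * Nc"
    using q_ge_2 Nc_pos by simp_all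
  then have "q ^ (b - 1) * Nc * (Q * J s i) + (q ^ b - 1) * Nc * (Q * K r i)
      \<le> q ^ (b - 1) * Nc * (q ^ (b + 1) * i - s + Q) + (q ^ b - 1) * Nc * (- (r + i) + Q)"
    using J_bound K_bound by (intro add_mono mult_left_mono)
  moreover have "Q * F r s i
      = q ^ b * Nb * Q * i - q ^ (b - 1) * Nc * (Q * J s i) - (q ^ b - 1) * Nc * (Q * K r i)"
    by (simp add: F_def algebra_simps)
  moreover have "q ^ b * Nb * Q * i - q ^ (b - 1) * Nc * (q ^ (b + 1) * i - s + Q)
      - (q ^ b - 1) * Nc * (- (r + i) + Q)
    = i * (q ^ b * Nb * Q - q ^ (b - 1) * Nc * q ^ (b + 1) + (q ^ b - 1) * Nc)
      + q ^ (b - 1) * Nc * (s - Q) + (q ^ b - 1) * Nc * (r - Q)"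
    by (simp add: algebra_simps)
  ultimately show ?thesis
    unfolding shift_coefficient by (simp add: algebra_simps)
qed

lemma eventually_F_nonneg: "\<exists>C. \<forall>v\<ge>C. \<forall>i\<in>{- v..<- v + Q}. 0 \<le> F r s i + t"
proof -
  define L where "L = q ^ (b - 1) * Nc * (s - Q) + (q ^ b - 1) * Nc * (r - Q)"
  have "0 \<le> F r s i + t" if v: "v \<ge> Q + \<bar>L\<bar> + Q * \<bar>t\<bar>" and i: "i < - v + Q" for v i
  proof -
    have "Q * - \<bar>t\<bar> \<le> Q * t"
      using Q_pos by (intro mult_left_mono) auto
    have "0 \<le> Q * \<bar>t\<bar>"
      using Q_pos by simp
    then have "Q \<le> v"
      using v by linarith
    then have "v - Q \<le> Nc * (v - Q)"
      using Nc_pos by (simp add: mult_le_cancel_right1)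
    also have "\<dots> \<le> Nc * - i"
      using i Nc_pos by (intro mult_left_mono) auto
    finally have "v - Q \<le> - (Nc * i)"
      by simp
    moreover have "L - Nc * i \<le> Q * F r s i"
      using F_lower_bound[of s r i] by (simp add: L_def)
    ultimately have "0 \<le> Q * (F r s i + t)"
      using v \<open>Q * - \<bar>t\<bar> \<le> Q * t\<close> by (simp add: distrib_left)
    then show ?thesis
      using Q_pos by (simp add: zero_le_mult_iff)
  qed
  then show ?thesis
    by (intro exI[of _ "Q + \<bar>L\<bar> + Q * \<bar>t\<bar>"]) auto
qed

lemma card_Omega_eq_sum:
  assumes "\<forall>i\<in>{- v..<- v + Q}. 0 \<le> F r s i + t"
  shows "int (card (Omega q (b + 1) b v r s t)) = (\<Sum>i\<in>{- v..<- v + Q}. (F r s i + t) div Nc + 1)"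
proof -
  have "card (Omega q (b + 1) b v r s t) = card {i. - v \<le> i \<and> - t \<le> F r s i}"
    unfolding Omega_eq_image by (rule card_image) (auto intro: inj_onI)
  moreover have "\<forall>i\<in>{- v..<- v + Q}. - t \<le> F r s i"
    using assms by auto
  ultimately show ?thesis
    using card_quasiperiodic_superlevel[OF Q_pos Nc_pos, of "F r s" "- v" "- t", OF F_shift] by simp
qed

(* Each floor is written in the shape (m * i + t) div n of sum_affine_div_periods. *)
lemma F_div:
  "(F r s i + t) div Nc = (q ^ b * Nb * i + t) div Nc
    + q ^ (b - 1) * ((- (q ^ (b + 1)) * i + s) div Q) + (q ^ b - 1) * ((1 * i + r) div Q)"
proof -
  have eq: "F r s i + t = (q ^ b * Nb * i + t)
    + (q ^ (b - 1) * ((- (q ^ (b + 1)) * i + s) div Q) + (q ^ b - 1) * ((1 * i + r) div Q)) * Nc"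
    by (simp add: F_def J_def K_def algebra_simps)
  show ?thesis
    unfolding eq using Nc_pos by simp
qed

lemma sum_F_div:
  "2 * (\<Sum>i\<in>{- v..<- v + Q}. (F r s i + t) div Nc + 1)
    = 2 + 2 * v + 2 * (q ^ b - 1) * r + 2 * q ^ (b - 1) * s + 2 * (q - 1) * t
      - ((q ^ (2 * b + 1) - 2) * (q ^ b + q ^ (b - 1) - 2) + (q ^ (2 * b + 1) - q))"
proof -
  let ?W = "{- v..<- v + Q}"
  define X Y where "X = q ^ b" and "Y = q ^ (b - 1)"
  define SD where "SD = (\<Sum>i\<in>?W. (X * Nb * i + t) div Nc)"
  define SJ where "SJ = (\<Sum>i\<in>?W. (- (q * X) * i + s) div Q)"
  define SK where "SK = (\<Sum>i\<in>?W. (1 * i + r) div Q)"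
  have sum: "(\<Sum>i\<in>?W. (F r s i + t) div Nc + 1) = SD + Y * SJ + (X - 1) * SK + Q"
    unfolding F_div SD_def SJ_def SK_def X_def Y_def using Q_pos
    by (simp add: sum.distrib sum_distrib_left)
  have "?W = {- v..<- v + int (nat (q - 1)) * Nc}"
    using q_ge_2 by (simp add: Q_eq)
  then have SD: "2 * Nc * SD = Q * (X * Nb * (2 * - v + Q - 1) + 2 * t - (Nc - 1))"
    using sum_affine_div_periods[OF Nc_pos coprime_pow_Nb_Nc, of t "- v" "nat (q - 1)"] q_ge_2
    by (simp add: SD_def Q_eq X_def)
  have SJ: "2 * SJ = - (q * X) * (2 * - v + Q - 1) + 2 * s - (Q - 1)"
    using sum_affine_div_periods[OF Q_pos coprime_pow_Q, of s "- v" 1] Q_pos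
    by (simp add: SJ_def X_def)
  have SK: "2 * SK = 2 * - v + Q - 1 + 2 * r - (Q - 1)"
    using sum_affine_div_periods[OF Q_pos, of 1 r "- v" 1] Q_pos
    by (simp add: SK_def)
  have "Q = q * X * X - 1"
    by (simp only: Q_def pow_c_eq X_def)
  moreover have "Nc \<noteq> 0" "X = q * Y" "(q - 1) * Nb = X - 1"
    using Nc_pos pow_b_eq N_mult_pred[of q b] by (simp_all add: X_def Y_def)
  ultimately have "2 * (SD + Y * SJ + (X - 1) * SK + Q) = 2 + 2 * v + 2 * (X - 1) * r + 2 * Y * s
      + 2 * (q - 1) * t - ((q * X * X - 2) * (X + Y - 2) + (q * X * X - q))"
    using SD SJ SK Q_eq by algebra
  then show ?thesis
    unfolding sum pow_c_eq X_def Y_def .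
qed

lemma card_Omega:
  assumes "\<forall>i\<in>{- v..<- v + Q}. 0 \<le> F r s i + t"
  shows "of_nat (card (Omega q (b + 1) b v r s t))
    = 1 - genus q (b + 1) b + of_int (v + (q ^ b - 1) * r + q ^ (b - 1) * s + (q - 1) * t)"
proof -
  define G where "G = (q ^ (2 * b + 1) - 2) * (q ^ b + q ^ (b - 1) - 2) + (q ^ (2 * b + 1) - q)"
  have "b + 1 + b = 2 * b + 1"
    by simp
  then have "genus q (b + 1) b = of_int G / 2"
    unfolding genus_def Let_def G_def by (simp only: add_diff_cancel_right')
  moreover have "2 * int (card (Omega q (b + 1) b v r s t))
      = 2 + 2 * (v + (q ^ b - 1) * r + q ^ (b - 1) * s + (q - 1) * t) - G"
    using card_Omega_eq_sum[OF assms] sum_F_div[where v = v and r = r and s = s and t = t]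
    by (simp add: G_def algebra_simps)
  then have "2 * (of_nat (card (Omega q (b + 1) b v r s t)) :: rat)
      = 2 + 2 * of_int (v + (q ^ b - 1) * r + q ^ (b - 1) * s + (q - 1) * t) - of_int G"
    by (metis (mono_tags) of_int_add of_int_diff of_int_mult of_int_numeral of_int_of_nat_eq)
  ultimately show ?thesis
    by (simp add: field_simps)
qed

lemma eventually_card_Omega:
  "\<exists>C. \<forall>v\<ge>C. of_nat (card (Omega q (b + 1) b v r s t))
    = 1 - genus q (b + 1) b + of_int (v + (q ^ b - 1) * r + q ^ (b - 1) * s + (q - 1) * t)"
  using eventually_F_nonneg[of r s t] card_Omega by blast

end

theorem proposition4:
  fixes p :: nat and m b a :: nat and q :: int
  assumes "prime p" and "m \<ge> 1" and "q = int p ^ m"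
    and "b \<ge> 1" and "a = b + 1"
    and "\<not> p dvd a"
  shows "\<forall>r s t :: int. \<exists>C :: int. \<forall>v :: int. v \<ge> C \<longrightarrow>
    of_nat (card (Omega q a b v r s t)) =
      1 - genus q a b + of_int (v + (q ^ (a - 1) - 1) * r + q ^ (b - 1) * s + (q - 1) * t)"
proof -
  have "2 \<le> int p ^ 1"
    using prime_ge_2_nat[OF assms(1)] by simp
  also have "\<dots> \<le> int p ^ m"
    using assms(2) prime_gt_0_nat[OF assms(1)] by (intro power_increasing) auto
  finally interpret omega_count q b
    using assms(3,4) by unfold_locales simp_all
  show ?thesis
    using eventually_card_Omega unfolding assms(5) by simp
qed

end
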